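(* Let $n\ge 3$, $k\ge 2$, and let $a,b\ge 2$ be integers with $a+b=k+1$. Let $G$ be a spanning subgraph of $CT_n$ containing no cycle of length $4k+2$. If $C$ is a cycle of length $4a$ in $G$ and $C'$ is a cycle of length $4b$ in $G$, and $C$ and $C'$ have at least one common edge, then $|\mathrm{supp}(C)\cap\mathrm{supp}(C')|\ge 3$.
   Context: $\mathrm{S}_n$ is the symmetric group on $\{1,\dots,n\}$; $\mathrm{supp}(x)=\{i:i^x\ne i\}$. $CT_n$ has vertex set $\mathrm{S}_n$, with $\{x,y\}$ an edge iff $yx^{-1}$ is a transposition. The support of an edge $\{u,z\}$ is $\mathrm{supp}(\{u,z\})=\mathrm{supp}(zu^{-1})$, and for a subgraph $H$ of $CT_n$, $\mathrm{supp}(H)=\bigcup_{\{u,z\}\in E(H)}\mathrm{supp}(\{u,z\})$. *)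

theory Defs
  imports "HOL-Combinatorics.Combinatorics"
begin

text \<open>Permutations of {1..n} are functions nat => nat; i^x is written x i (right action).
  Hence the product y x^{-1} (first y, then x^{-1}) is the function inv x o y.\<close>

definition Sym :: "nat \<Rightarrow> (nat \<Rightarrow> nat) set" where
  "Sym n = {p. p permutes {1..n}}"

definition supp :: "(nat \<Rightarrow> nat) \<Rightarrow> nat set" where
  "supp x = {i. x i \<noteq> i}"

definition is_transposition :: "(nat \<Rightarrow> nat) \<Rightarrow> bool" where
  "is_transposition t \<longleftrightarrow> (\<exists>i j. i \<noteq> j \<and> t = transpose i j)"

definition CT_edges :: "nat \<Rightarrow> (nat \<Rightarrow> nat) set set" where
  "CT_edges n = {{x, y} | x y. x \<in> Sym n \<and> y \<in> Sym n \<and> is_transposition (inv x \<circ> y)}"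

definition supp_edges :: "(nat \<Rightarrow> nat) set set \<Rightarrow> nat set" where
  "supp_edges F = \<Union>{supp (inv u \<circ> z) | u z. {u, z} \<in> F}"

definition cycle_edges :: "'v list \<Rightarrow> 'v set set" where
  "cycle_edges vs = {{vs ! i, vs ! ((i + 1) mod length vs)} | i. i < length vs}"

definition cycle_in :: "'v set set \<Rightarrow> 'v list \<Rightarrow> bool" where
  "cycle_in E vs \<longleftrightarrow> length vs \<ge> 3 \<and> distinct vs \<and> cycle_edges vs \<subseteq> E"

end

theory Submission
  imports Defs
begin

text \<open>The shared edge is \<open>{x, x \<circ> transpose i j}\<close>, so \<open>i\<close> and \<open>j\<close> lie in both supports.
  Adjacent vertices of a cycle differ only at points of the cycle's support, so all vertices of
  \<open>C\<close> agree off \<open>supp(C)\<close>, and likewise for \<open>C'\<close>. If the supports met only in \<open>{i, j}\<close>,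
  every common vertex of \<open>C\<close> and \<open>C'\<close> would agree with \<open>x\<close> off \<open>{i, j}\<close> and hence be
  \<open>x\<close> or \<open>x \<circ> transpose i j\<close>. The two cycles would then meet exactly in the shared edge, and
  their union minus that edge is a cycle of length \<open>4a + 4b - 2 = 4k + 2\<close>.\<close>

abbreviation walk_in :: "'v set set \<Rightarrow> 'v list \<Rightarrow> bool" where
  "walk_in E \<equiv> successively (\<lambda>x y. {x, y} \<in> E)"

lemma cycle_edges_rotate_subset: "cycle_edges (rotate m vs) \<subseteq> cycle_edges vs"
proof
  fix e assume "e \<in> cycle_edges (rotate m vs)"
  then obtain i where i: "i < length vs"
    and e: "e = {rotate m vs ! i, rotate m vs ! ((i + 1) mod length vs)}"
    unfolding cycle_edges_def length_rotate by blast
  define j where "j = (i + m) mod length vs"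
  have pos: "length vs > 0"
    using i by linarith
  then have "(i + 1) mod length vs < length vs"
    by simp
  then have "e = {vs ! j, vs ! ((j + 1) mod length vs)}"
    using i e by (simp add: nth_rotate j_def add.commute mod_simps)
  moreover have "j < length vs"
    using pos by (simp add: j_def)
  ultimately show "e \<in> cycle_edges vs"
    unfolding cycle_edges_def by blast
qed

lemma cycle_edges_rotate [simp]: "cycle_edges (rotate m vs) = cycle_edges vs"
proof
  let ?r = "length vs - m mod length vs"
  have "rotate ?r (rotate m vs) = vs"
  proof (cases "vs = []")
    case False
    then have "(?r + m) mod length vs = 0"
      by (metis add.commute le_add_diff_inverse mod_add_left_eq mod_le_divisor mod_self length_greater_0_conv)
    then show ?thesis by (simp add: rotate_rotate)
  qed simp
  then show "cycle_edges vs \<subseteq> cycle_edges (rotate m vs)"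
    by (metis cycle_edges_rotate_subset)
qed (rule cycle_edges_rotate_subset)

lemma successively_iff_nth:
  "successively P xs \<longleftrightarrow> (\<forall>i. Suc i < length xs \<longrightarrow> P (xs ! i) (xs ! Suc i))"
proof (induction P xs rule: successively.induct)
  case (3 P x y xs)
  then show ?case
    by (auto simp: less_Suc_eq_0_disj nth_Cons split: nat.splits)
qed simp_all

lemma walk_in_if_cycle_edges_subset:
  assumes "cycle_edges vs \<subseteq> E"
  shows "walk_in E vs"
proof -
  have "{vs ! i, vs ! Suc i} \<in> E" if "Suc i < length vs" for i
  proof -
    have "{vs ! i, vs ! ((i + 1) mod length vs)} \<in> cycle_edges vs"
      unfolding cycle_edges_def using that by force
    with that assms show ?thesis by auto
  qed
  then show ?thesis
    by (simp add: successively_iff_nth)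
qed

lemma cycle_edge_as_last_hd_of_rotate:
  assumes "e \<in> cycle_edges C"
  obtains m where "e = {last (rotate m C), hd (rotate m C)}"
proof -
  obtain i where i: "i < length C" and e: "e = {C ! i, C ! ((i + 1) mod length C)}"
    using assms unfolding cycle_edges_def by blast
  let ?R = "rotate (Suc i) C"
  have "C \<noteq> []"
    using i by auto
  moreover have "Suc i + (length C - 1) = i + length C"
    using i by simp
  then have "(Suc i + (length C - 1)) mod length C = i"
    using i by simp
  ultimately have "last ?R = C ! i" "hd ?R = C ! ((i + 1) mod length C)"
    by (simp_all add: last_conv_nth hd_conv_nth nth_rotate del: rotate_Suc)
  with e show thesis
    by (intro that[of "Suc i"]) auto
qed

lemma cycle_as_walk_through_edge:
  assumes "cycle_edges C \<subseteq> E" "distinct C" "{u, v} \<in> cycle_edges C"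
  obtains A where "walk_in E A" "distinct A" "set A = set C" "length A = length C"
    "hd A = u" "last A = v"
proof -
  obtain m where uv: "{u, v} = {last (rotate m C), hd (rotate m C)}"
    using cycle_edge_as_last_hd_of_rotate[OF assms(3)] .
  let ?R = "rotate m C"
  have R: "walk_in E ?R" "distinct ?R" "set ?R = set C" "length ?R = length C"
    using assms(1,2) walk_in_if_cycle_edges_subset[of "?R" E] by auto
  have "C \<noteq> []"
    using assms(3) unfolding cycle_edges_def by auto
  show thesis
  proof (cases "hd ?R = u")
    case True
    with uv have "last ?R = v"
      by (auto simp: doubleton_eq_iff)
    with True R that show thesis
      by blast
  next
    case False
    with uv have "hd (rev ?R) = u" "last (rev ?R) = v"
      using \<open>C \<noteq> []\<close> by (auto simp: doubleton_eq_iff hd_rev last_rev)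
    moreover have "walk_in E (rev ?R)"
      using R(1) by (simp add: insert_commute)
    ultimately show thesis
      using R that[of "rev ?R"] by simp
  qed
qed

lemma Union_cycle_edges: "\<Union> (cycle_edges vs) = set vs"
proof
  have "(i + 1) mod length vs < length vs" if "i < length vs" for i
  proof -
    have "0 < length vs"
      using that by linarith
    then show ?thesis
      by simp
  qed
  then show "\<Union> (cycle_edges vs) \<subseteq> set vs"
    unfolding cycle_edges_def by auto
  show "set vs \<subseteq> \<Union> (cycle_edges vs)"
  proof
    fix v assume "v \<in> set vs"
    then obtain i where "i < length vs" "v = vs ! i"
      by (metis in_set_conv_nth)
    then show "v \<in> \<Union> (cycle_edges vs)"
      unfolding cycle_edges_def by blast
  qed
qed

lemma cycle_edges_subset_if_closed_walk:
  assumes "vs \<noteq> []" "walk_in E (vs @ [hd vs])"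
  shows "cycle_edges vs \<subseteq> E"
proof
  fix e assume "e \<in> cycle_edges vs"
  then obtain i where i: "i < length vs" and e: "e = {vs ! i, vs ! ((i + 1) mod length vs)}"
    unfolding cycle_edges_def by blast
  have "{(vs @ [hd vs]) ! i, (vs @ [hd vs]) ! Suc i} \<in> E"
    using assms(2) i unfolding successively_iff_nth by simp
  moreover have "(vs @ [hd vs]) ! i = vs ! i"
    using i by (simp add: nth_append)
  moreover have "(vs @ [hd vs]) ! Suc i = vs ! ((i + 1) mod length vs)"
  proof (cases "Suc i = length vs")
    case True
    then show ?thesis
      using assms(1) by (simp add: hd_conv_nth)
  next
    case False
    then show ?thesis
      using i by (simp add: nth_append)
  qed
  ultimately show "e \<in> E"
    using e by simp
qed

lemma cycle_glue:
  assumes "walk_in E A" "walk_in E (last A # M @ [hd A])" "A \<noteq> []"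
  shows "cycle_edges (A @ M) \<subseteq> E"
proof -
  obtain A' x where A: "A = A' @ [x]"
    using assms(3) rev_exhaust by blast
  have "{x, hd (M @ [hd A])} \<in> E" "walk_in E (M @ [hd A])"
    using assms(2) by (simp_all add: A successively_Cons)
  then have "walk_in E (A @ M @ [hd A])"
    using assms(1) successively_append_iff[of _ A "M @ [hd A]"] by (simp add: A)
  then have "walk_in E ((A @ M) @ [hd (A @ M)])"
    using assms(3) by simp
  then show ?thesis
    using assms(3) by (intro cycle_edges_subset_if_closed_walk) simp_all
qed

lemma cycle_glue_along_edge:
  assumes "cycle_in E C" "cycle_in E C'" "{u, v} \<in> cycle_edges C" "{v, u} \<in> cycle_edges C'"
    "set C \<inter> set C' \<subseteq> {u, v}"
  shows "\<exists>vs. cycle_in E vs \<and> length vs = length C + length C' - 2"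
proof -
  obtain A where A: "walk_in E A" "distinct A" "set A = set C" "length A = length C"
    "hd A = u" "last A = v"
    using assms(1,3) cycle_as_walk_through_edge unfolding cycle_in_def by metis
  obtain B where B: "walk_in E B" "distinct B" "set B = set C'" "length B = length C'"
    "hd B = v" "last B = u"
    using assms(2,4) cycle_as_walk_through_edge unfolding cycle_in_def by metis
  define M where "M = butlast (tl B)"
  have "length C \<ge> 3" "length C' \<ge> 3"
    using assms(1,2) unfolding cycle_in_def by simp_all
  then have "tl B \<noteq> []"
    using B(4) by (cases B) auto
  then have "tl B = M @ [u]"
    using B(6) last_tl[of B] unfolding M_def by (metis append_butlast_last_id)
  then have B_split: "B = v # M @ [u]"
    using B(4,5) \<open>length C' \<ge> 3\<close> by (cases B) auto
  have "A \<noteq> []"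
    using A(4) \<open>length C \<ge> 3\<close> by auto
  have "cycle_edges (A @ M) \<subseteq> E"
    using cycle_glue[of E A M] A B(1) B_split \<open>A \<noteq> []\<close> by simp
  moreover have "distinct (A @ M)"
    using A(2,3) B(2,3) B_split assms(5) by auto
  moreover have "length (A @ M) = length C + length C' - 2"
    using A(4) B(4) B_split by simp
  ultimately show ?thesis
    using \<open>length C \<ge> 3\<close> \<open>length C' \<ge> 3\<close> unfolding cycle_in_def by (intro exI[of _ "A @ M"]) simp
qed

lemma successively_eq_set_subset: "successively (=) xs \<Longrightarrow> set xs \<subseteq> {hd xs}"
  by (induction xs) (auto simp: successively_Cons)

lemma supp_transpose: "i \<noteq> j \<Longrightarrow> supp (transpose i j) = {i, j}"
  by (auto simp: supp_def transpose_def)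

lemma permutes_eq_or_eq_transpose:
  assumes "w permutes S" "x permutes S" "\<And>t. t \<notin> {i, j} \<Longrightarrow> w t = x t"
  shows "w = x \<or> w = x \<circ> transpose i j"
proof -
  let ?p = "inv x \<circ> w"
  have "?p permutes S"
    using assms(1,2) by (rule permutes_compose[OF _ permutes_inv])
  moreover have "?p t = t" if "t \<notin> {i, j}" for t
    using permutes_inverses(2)[OF assms(2)] assms(3)[OF that] by simp
  ultimately have "?p permutes {i, j}"
    using permutes_superset by blast
  then have "?p = id \<or> ?p = transpose i j"
    by (rule iffD1[OF permutes_doubleton_iff])
  moreover have "w = x \<circ> ?p"
    using permutes_inv_o(1)[OF assms(2)] by (simp flip: comp_assoc)
  ultimately show ?thesis
    by auto
qed

lemma CT_edge_transposition:
  assumes "{u, z} \<in> CT_edges n"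
  obtains i j where "i \<noteq> j" "z = u \<circ> transpose i j" "u permutes {1..n}" "z permutes {1..n}"
proof -
  obtain x y where xy: "{u, z} = {x, y}" "x \<in> Sym n" "y \<in> Sym n"
    and "is_transposition (inv x \<circ> y)"
    using assms unfolding CT_edges_def by blast
  then obtain i j where ij: "i \<noteq> j" "inv x \<circ> y = transpose i j"
    unfolding is_transposition_def by blast
  have x: "x permutes {1..n}" and "y permutes {1..n}"
    using xy(2,3) unfolding Sym_def by simp_all
  have y: "y = x \<circ> transpose i j"
    using permutes_inv_o(1)[OF x] by (simp flip: ij(2) comp_assoc)
  then have "x = y \<circ> transpose i j"
    by (simp add: comp_assoc)
  consider "u = x" "z = y" | "u = y" "z = x"
    using xy(1) by (auto simp: doubleton_eq_iff)
  then show thesis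
    using that ij(1) x \<open>y permutes {1..n}\<close> y \<open>x = y \<circ> transpose i j\<close> by cases blast+
qed

lemma transpose_points_in_supp_edges:
  assumes "{x, x \<circ> transpose i j} \<in> F" "x permutes S" "i \<noteq> j"
  shows "{i, j} \<subseteq> supp_edges F"
proof -
  have "supp (inv x \<circ> (x \<circ> transpose i j)) = {i, j}"
    using assms(3) by (simp add: supp_transpose permutes_inv_o(2)[OF assms(2)] flip: comp_assoc)
  with assms(1) show ?thesis
    unfolding supp_edges_def by blast
qed

lemma CT_cycle_vertex_permutes:
  assumes "cycle_edges vs \<subseteq> CT_edges n" "w \<in> set vs"
  shows "w permutes {1..n}"
proof -
  obtain e where "e \<in> cycle_edges vs" "w \<in> e"
    using assms(2) Union_cycle_edges[of vs] by blast
  moreover have "f \<subseteq> Sym n" if "f \<in> CT_edges n" for f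
    using that unfolding CT_edges_def by auto
  ultimately show ?thesis
    using assms(1) unfolding Sym_def by blast
qed

lemma CT_supp_edges_subset:
  assumes "F \<subseteq> CT_edges n"
  shows "supp_edges F \<subseteq> {1..n}"
proof
  fix t assume "t \<in> supp_edges F"
  then obtain u z where uz: "{u, z} \<in> F" "t \<in> supp (inv u \<circ> z)"
    unfolding supp_edges_def by blast
  then obtain i j where u: "u permutes {1..n}" and z: "z permutes {1..n}"
    using assms CT_edge_transposition by blast
  show "t \<in> {1..n}"
  proof (rule ccontr)
    assume t: "t \<notin> {1..n}"
    then have "inv u (z t) = t"
      using permutes_not_in[OF z t] permutes_not_in[OF permutes_inv[OF u] t] by simp
    with uz(2) show False
      unfolding supp_def by simp
  qed
qed

lemma CT_edge_agree_outside_supp: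
  assumes "F \<subseteq> CT_edges n" "{u, z} \<in> F" "t \<notin> supp_edges F"
  shows "u t = z t"
proof -
  obtain i j where u: "u permutes {1..n}"
    using assms(1,2) CT_edge_transposition by blast
  have "supp (inv u \<circ> z) \<subseteq> supp_edges F"
    using assms(2) unfolding supp_edges_def by blast
  then have "inv u (z t) = t"
    using assms(3) unfolding supp_def by auto
  then have "u (inv u (z t)) = u t"
    by simp
  then show ?thesis
    by (simp add: permutes_inverses(1)[OF u])
qed

lemma CT_cycle_vertices_agree_outside_supp:
  assumes "cycle_edges vs \<subseteq> CT_edges n" "v \<in> set vs" "w \<in> set vs"
    "t \<notin> supp_edges (cycle_edges vs)"
  shows "v t = w t"
proof -
  have "walk_in (cycle_edges vs) vs"
    by (rule walk_in_if_cycle_edges_subset) simp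
  then have "successively (\<lambda>x y. x t = y t) vs"
    by (rule successively_mono) (use assms(1,4) CT_edge_agree_outside_supp in blast)
  then have "set (map (\<lambda>x. x t) vs) \<subseteq> {hd (map (\<lambda>x. x t) vs)}"
    by (intro successively_eq_set_subset) (simp add: successively_map)
  then have "v t = hd (map (\<lambda>x. x t) vs)" "w t = hd (map (\<lambda>x. x t) vs)"
    using assms(2,3) by auto
  then show ?thesis
    by simp
qed

lemma CT_cycles_common_vertices:
  assumes "cycle_edges C \<subseteq> CT_edges n" "cycle_edges C' \<subseteq> CT_edges n"
    "x \<in> set C \<inter> set C'"
    "supp_edges (cycle_edges C) \<inter> supp_edges (cycle_edges C') \<subseteq> {i, j}"
  shows "set C \<inter> set C' \<subseteq> {x, x \<circ> transpose i j}"
proof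
  fix w assume w: "w \<in> set C \<inter> set C'"
  have "w t = x t" if "t \<notin> {i, j}" for t
  proof -
    have "t \<notin> supp_edges (cycle_edges C) \<or> t \<notin> supp_edges (cycle_edges C')"
      using that assms(4) by blast
    then show ?thesis
      using assms(1-3) w CT_cycle_vertices_agree_outside_supp[of _ n w x t] by blast
  qed
  then have "w = x \<or> w = x \<circ> transpose i j"
    using assms(1,3) w CT_cycle_vertex_permutes[OF assms(1)]
    by (intro permutes_eq_or_eq_transpose[of _ "{1..n}"]) auto
  then show "w \<in> {x, x \<circ> transpose i j}"
    by blast
qed

theorem lemma3p2:
  fixes n k a b :: nat
    and E :: "(nat \<Rightarrow> nat) set set"
    and C C' :: "(nat \<Rightarrow> nat) list"
  assumes "n \<ge> 3" "k \<ge> 2" "a \<ge> 2" "b \<ge> 2" "a + b = k + 1"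
    and "E \<subseteq> CT_edges n"
    and "\<not> (\<exists>vs. cycle_in E vs \<and> length vs = 4 * k + 2)"
    and "cycle_in E C" "length C = 4 * a"
    and "cycle_in E C'" "length C' = 4 * b"
    and "cycle_edges C \<inter> cycle_edges C' \<noteq> {}"
  shows "card (supp_edges (cycle_edges C) \<inter> supp_edges (cycle_edges C')) \<ge> 3"
proof (rule ccontr)
  let ?S = "supp_edges (cycle_edges C) \<inter> supp_edges (cycle_edges C')"
  assume "\<not> card ?S \<ge> 3"
  have CT: "cycle_edges C \<subseteq> CT_edges n" "cycle_edges C' \<subseteq> CT_edges n"
    using assms(6,8,10) unfolding cycle_in_def by auto
  obtain e where e: "e \<in> cycle_edges C" "e \<in> cycle_edges C'"
    using assms(12) by blast
  have "e \<in> CT_edges n"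
    using CT(1) e(1) by blast
  then obtain x y where xy: "e = {x, y}" "{x, y} \<in> CT_edges n"
    unfolding CT_edges_def by auto
  then obtain i j where ij: "i \<noteq> j" "y = x \<circ> transpose i j" and x: "x permutes {1..n}"
    using CT_edge_transposition[OF xy(2)] by metis
  have "{i, j} \<subseteq> ?S"
    using transpose_points_in_supp_edges[OF _ x ij(1)] e xy(1) ij(2) by blast
  moreover have "finite ?S"
    using CT_supp_edges_subset[OF CT(1)] by (simp add: finite_subset)
  moreover have "card ?S \<le> card {i, j}"
    using \<open>\<not> card ?S \<ge> 3\<close> ij(1) by simp
  ultimately have "?S \<subseteq> {i, j}"
    using card_seteq by blast
  moreover have "x \<in> set C \<inter> set C'"
    using Union_upper[OF e(1)] Union_upper[OF e(2)] xy(1) by (simp add: Union_cycle_edges)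
  ultimately have "set C \<inter> set C' \<subseteq> {x, y}"
    using CT_cycles_common_vertices[OF CT] ij(2) by blast
  moreover have "{y, x} \<in> cycle_edges C'"
    using e(2) xy(1) by (simp add: insert_commute)
  ultimately obtain vs where "cycle_in E vs" "length vs = length C + length C' - 2"
    using cycle_glue_along_edge[OF assms(8,10)] e(1) xy(1) by blast
  moreover have "length C + length C' - 2 = 4 * k + 2"
    using assms(5,9,11) by simp
  ultimately show False
    using assms(7) by auto
qed

end
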